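(* Let $p\ge2$ be an integer and let $A\in GL_n(\mathbb{C}(\{1/z\}))$ be such that the Mahler system $\phi_p(Y)=AY$ is Fuchsian at $\infty$. Then there exists a unique $F\in GL_n(\mathbb{C}[[1/z]])$ with $F(\infty)=I_n$ and $\phi_p(F)^{-1}AF=A(\infty)$. Moreover $F\in GL_n(\mathbb{C}\{1/z\})$, and if $A\in GL_n(\mathbb{C}(z))$ then $F\in GL_n(\mathcal{M}(\mathbb{P}^1(\mathbb{C})\setminus\overline{D}(0,1)))$.
   Context: $\phi_p$ acts entrywise by $f(z)\mapsto f(z^p)$. $\mathbb{C}\{1/z\}$ denotes power series in $1/z$ convergent near $\infty$ and $\mathbb{C}(\{1/z\})$ its fraction field. The system is Fuchsian at $\infty$ if $A$ is regular at $\infty$, i.e. $A(1/z)$ has entries analytic at $0$ and $A(\infty)\in GL_n(\mathbb{C})$. $\mathcal{M}(U)$ denotes meromorphic functions on $U$; $\overline{D}(0,1)$ is the closed unit disk. *)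

theory Defs
  imports "HOL-Analysis.Analysis" "HOL-Complex_Analysis.Complex_Analysis"
    "HOL-Computational_Algebra.Polynomial_FPS"
begin

abbreviation ent :: "'a^'n^'m \<Rightarrow> 'm \<Rightarrow> 'n \<Rightarrow> 'a" where
  "ent M i j \<equiv> vec_nth (vec_nth M i) j"

text \<open>Coordinate convention: w = 1/z.  A power series in 1/z is a complex fps in w.
  The Mahler operator phi_p : f(z) to f(z^p) becomes f(w) to f(w^p).\<close>

definition mahler_phi :: "nat \<Rightarrow> complex fps \<Rightarrow> complex fps" where
  "mahler_phi p f = f oo (fps_X ^ p)"

definition mat_phi :: "nat \<Rightarrow> complex fps ^'n^'m \<Rightarrow> complex fps ^'n^'m" where
  "mat_phi p M = (\<chi> i j. mahler_phi p (ent M i j))"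

definition mat_at_infty :: "complex fps ^'n^'m \<Rightarrow> complex ^'n^'m" where
  "mat_at_infty M = (\<chi> i j. fps_nth (ent M i j) 0)"

definition const_mat :: "complex ^'n^'m \<Rightarrow> complex fps ^'n^'m" where
  "const_mat C = (\<chi> i j. fps_const (ent C i j))"

definition convergent_fps :: "complex fps \<Rightarrow> bool" where
  "convergent_fps f \<longleftrightarrow> fps_conv_radius f > 0"

definition convergent_mat :: "complex fps ^'n^'m \<Rightarrow> bool" where
  "convergent_mat M \<longleftrightarrow> (\<forall>i j. convergent_fps (ent M i j))"

definition GL_convergent :: "complex fps ^'n^'n \<Rightarrow> bool" where
  "GL_convergent M \<longleftrightarrow> convergent_mat M \<and>
     (\<exists>G. convergent_mat G \<and> M ** G = mat 1 \<and> G ** M = mat 1)"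

text \<open>A matrix A in GL_n(C({1/z})) which is regular at infinity: entries analytic at
  infinity (convergent power series in 1/z), nonzero determinant, and A(infinity) invertible.\<close>
definition fuchsian_at_infty :: "complex fps ^'n^'n \<Rightarrow> bool" where
  "fuchsian_at_infty A \<longleftrightarrow> convergent_mat A \<and> det A \<noteq> 0 \<and> invertible (mat_at_infty A)"

text \<open>Expansion at infinity of a rational function of z regular at infinity,
  i.e. a rational function of w = 1/z regular at w = 0.\<close>
definition rational_fps :: "complex fps \<Rightarrow> bool" where
  "rational_fps f \<longleftrightarrow> (\<exists>P Q :: complex poly. poly Q 0 \<noteq> 0 \<and> f = fps_of_poly P / fps_of_poly Q)"

definition rational_mat :: "complex fps ^'n^'m \<Rightarrow> bool" where
  "rational_mat M \<longleftrightarrow> (\<forall>i j. rational_fps (ent M i j))"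

text \<open>A power series f in w extends to a meromorphic function on P^1(C) minus the closed unit
  disk in z, i.e. on the open unit disk |w| < 1 in w.\<close>
definition meromorphic_ext :: "complex fps \<Rightarrow> (complex \<Rightarrow> complex) \<Rightarrow> bool" where
  "meromorphic_ext f g \<longleftrightarrow> g meromorphic_on ball 0 1 \<and>
     (\<forall>\<^sub>F w in at 0. g w = eval_fps f w)"

definition GL_meromorphic :: "complex fps ^'n^'n \<Rightarrow> bool" where
  "GL_meromorphic M \<longleftrightarrow>
     (\<exists>Fm :: (complex \<Rightarrow> complex)^'n^'n. \<exists>Gm :: (complex \<Rightarrow> complex)^'n^'n.
        (\<forall>i j. meromorphic_ext (ent M i j) (ent Fm i j)) \<and>
        (\<forall>i j. ent Gm i j meromorphic_on ball 0 1) \<and>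
        (\<forall>\<^sub>F w in at 0. (\<chi> i j. ent Fm i j w) ** (\<chi> i j. ent Gm i j w) = mat 1))"

end

theory Submission
  imports Defs
begin

text \<open>
  Write \<open>A = (\<Sum>k. A\<^sub>k w\<^sup>k)\<close> and \<open>F = (\<Sum>k. F\<^sub>k w\<^sup>k)\<close> in \<open>w = 1/z\<close>. The gauge equation
  reads \<open>A F = \<phi>\<^sub>p(F) A\<^sub>0\<close>, and its coefficient of \<open>w\<^sup>m\<close> gives
  \<open>A\<^sub>0 F\<^sub>m = [p dvd m] F\<^bsub>m/p\<^esub> A\<^sub>0 - (\<Sum>k=1..m. A\<^sub>k F\<^bsub>m-k\<^esub>)\<close>. Since \<open>m/p < m\<close>, this
  determines every \<open>F\<^sub>m\<close> from \<open>F\<^sub>0 = I\<close>, which gives existence and uniqueness. If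
  \<open>|A\<^sub>k| \<le> C R\<^sup>k\<close>, a majorant argument on the same recursion gives \<open>|F\<^sub>m| \<le> |F\<^sub>0| M\<^sup>m\<close>,
  so \<open>F\<close> converges; the inverse of a matrix series with constant term \<open>I\<close> is bounded in
  the same way.

  If \<open>A\<close> is rational, \<open>F(w) = A(w)\<^sup>-\<^sup>1 F(w\<^sup>p) A\<^sub>0\<close> continues \<open>F\<close> meromorphically from the
  disk of radius \<open>r\<close> to the disks of radius \<open>root (p\<^sup>k) r\<close>, which exhaust \<open>|w| < 1\<close>, that is
  \<open>|z| > 1\<close>. By the identity theorem the successive continuations agree, so they glue.
\<close>

section \<open>Coefficient matrices\<close>

definition coeff_mat :: "'a fps^'n^'m \<Rightarrow> nat \<Rightarrow> 'a^'n^'m" where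
  "coeff_mat M k = (\<chi> i j. fps_nth (ent M i j) k)"

definition fps_mat :: "(nat \<Rightarrow> 'a^'n^'m) \<Rightarrow> 'a fps^'n^'m" where
  "fps_mat c = (\<chi> i j. Abs_fps (\<lambda>k. c k $ i $ j))"

lemma coeff_mat_fps_mat [simp]: "coeff_mat (fps_mat c) = c"
  by (auto simp: coeff_mat_def fps_mat_def vec_eq_iff)

lemma fps_mat_eq_iff: "M = N \<longleftrightarrow> (\<forall>k. coeff_mat M k = coeff_mat N k)"
  by (auto simp: coeff_mat_def vec_eq_iff fps_eq_iff)

lemma fps_mat_coeff_mat [simp]: "fps_mat (coeff_mat M) = M"
  by (simp add: fps_mat_eq_iff)

lemma coeff_mat_mult:
  "coeff_mat (M ** N) m = (\<Sum>k\<le>m. coeff_mat M k ** coeff_mat N (m - k))"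
  by (simp add: coeff_mat_def matrix_matrix_mult_def vec_eq_iff fps_sum_nth fps_mult_nth
      sum_component atLeast0AtMost) (intro allI sum.swap)

lemma coeff_mat_mat_1: "coeff_mat (mat 1) k = (if k = 0 then mat 1 else 0)"
  by (auto simp: coeff_mat_def mat_def vec_eq_iff)

lemma coeff_mat_const_mat: "coeff_mat (const_mat C) k = (if k = 0 then C else 0)"
  by (auto simp: coeff_mat_def const_mat_def vec_eq_iff)

lemma mat_at_infty_eq_coeff_mat: "mat_at_infty M = coeff_mat M 0"
  by (simp add: mat_at_infty_def coeff_mat_def)

lemma fps_compose_X_power_nth:
  fixes f :: "'a::comm_ring_1 fps"
  assumes "p \<ge> 1"
  shows "(f oo fps_X ^ p) $ m = (if p dvd m then f $ (m div p) else 0)"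
proof -
  have "((fps_X :: 'a fps) ^ p) ^ i = fps_X ^ (p * i)" for i
    by (simp add: power_mult)
  then have "(f oo fps_X ^ p) $ m = (\<Sum>i=0..m. f $ i * (if m = p * i then 1 else 0))"
    by (simp add: fps_compose_nth fps_X_power_iff)
  also have "\<dots> = (\<Sum>i=0..m. if i = m div p \<and> p dvd m then f $ i else 0)"
    using assms by (intro sum.cong refl) auto
  also have "\<dots> = (if p dvd m then f $ (m div p) else 0)"
    using assms by (auto simp: sum.delta' div_le_dividend)
  finally show ?thesis .
qed

lemma coeff_mat_mat_phi:
  assumes "p \<ge> 1"
  shows "coeff_mat (mat_phi p M) m = (if p dvd m then coeff_mat M (m div p) else 0)"
  using assms
  by (auto simp: coeff_mat_def mat_phi_def mahler_phi_def fps_compose_X_power_nth vec_eq_iff)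

lemma sum_atMost_split_first:
  fixes f :: "nat \<Rightarrow> 'a::comm_monoid_add"
  shows "(\<Sum>k\<le>m. f k) = f 0 + (\<Sum>k=1..m. f k)"
proof -
  have "{..m} = insert 0 {1..m}" by auto
  then show ?thesis by simp
qed

lemma matrix_inv_inverse:
  assumes "invertible X"
  shows "X ** matrix_inv X = mat 1" and "matrix_inv X ** X = mat 1"
  using someI_ex[OF assms[unfolded invertible_def]] by (simp_all add: matrix_inv_def)

lemma matrix_inv_mult_eq_iff:
  fixes X :: "'a::comm_ring_1^'n^'n"
  assumes "invertible X"
  shows "matrix_inv X ** Y = Z \<longleftrightarrow> Y = X ** Z"
proof
  assume "matrix_inv X ** Y = Z"
  then have "X ** (matrix_inv X ** Y) = X ** Z" by simp
  then show "Y = X ** Z" by (simp add: matrix_mul_assoc matrix_inv_inverse[OF assms])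
next
  assume "Y = X ** Z"
  then show "matrix_inv X ** Y = Z" by (simp add: matrix_mul_assoc matrix_inv_inverse[OF assms])
qed

section \<open>Matrix power series with constant term one\<close>

function inverse_coeffs :: "(nat \<Rightarrow> 'a::comm_ring_1^'n^'n) \<Rightarrow> nat \<Rightarrow> 'a^'n^'n" where
  "inverse_coeffs c m =
     (if m = 0 then mat 1 else - (\<Sum>k=1..m. c k ** inverse_coeffs c (m - k)))"
  by auto
termination by (relation "Wellfounded.measure snd") auto

declare inverse_coeffs.simps [simp del]

lemma inverse_coeffs_0 [simp]: "inverse_coeffs c 0 = mat 1"
  by (simp add: inverse_coeffs.simps)

lemma inverse_coeffs_convolution:
  assumes "c 0 = mat 1"
  shows "(\<Sum>k\<le>m. c k ** inverse_coeffs c (m - k)) = (if m = 0 then mat 1 else 0)"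
proof (cases "m = 0")
  case False
  then have "inverse_coeffs c m = - (\<Sum>k=1..m. c k ** inverse_coeffs c (m - k))"
    by (subst inverse_coeffs.simps) simp
  with False assms show ?thesis by (simp add: sum_atMost_split_first)
qed (use assms in simp)

lemma fps_mat_inverse_coeffs_right:
  assumes "coeff_mat M 0 = mat 1"
  shows "M ** fps_mat (inverse_coeffs (coeff_mat M)) = mat 1"
  unfolding fps_mat_eq_iff coeff_mat_mult coeff_mat_fps_mat coeff_mat_mat_1
  using inverse_coeffs_convolution[of "coeff_mat M", OF assms] by simp

text \<open>A right inverse of the right inverse is \<open>M\<close> itself, so no field is needed.\<close>
lemma fps_mat_inverse_coeffs:
  assumes "coeff_mat M 0 = mat 1"
  shows "M ** fps_mat (inverse_coeffs (coeff_mat M)) = mat 1"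
    and "fps_mat (inverse_coeffs (coeff_mat M)) ** M = mat 1"
proof -
  define H where "H = fps_mat (inverse_coeffs (coeff_mat M))"
  define K where "K = fps_mat (inverse_coeffs (coeff_mat H))"
  have MH: "M ** H = mat 1"
    unfolding H_def by (rule fps_mat_inverse_coeffs_right[OF assms])
  have HK: "H ** K = mat 1"
    unfolding K_def by (rule fps_mat_inverse_coeffs_right) (simp add: H_def)
  have "M = M ** (H ** K)" by (simp add: HK)
  also have "\<dots> = K" by (simp add: matrix_mul_assoc MH)
  finally show "H ** M = mat 1" using HK by simp
  show "M ** H = mat 1" by (fact MH)
qed

lemma invertible_fps_mat_if_coeff_0:
  fixes M :: "'a::comm_ring_1 fps^'n^'n"
  assumes "coeff_mat M 0 = mat 1"
  shows "invertible M"
  unfolding invertible_def using fps_mat_inverse_coeffs[OF assms] by blast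

section \<open>The formal gauge transformation\<close>

lemma mahler_gauge_eq_iff:
  assumes "p \<ge> 1" and "coeff_mat F 0 = mat 1"
  shows "matrix_inv (mat_phi p F) ** A ** F = const_mat C \<longleftrightarrow>
         A ** F = mat_phi p F ** const_mat C"
proof -
  have "invertible (mat_phi p F)"
    using assms by (intro invertible_fps_mat_if_coeff_0) (simp add: coeff_mat_mat_phi)
  from matrix_inv_mult_eq_iff[OF this, of "A ** F"] show ?thesis
    by (simp add: matrix_mul_assoc)
qed

definition mahler_coeff_eq :: "nat \<Rightarrow> (nat \<Rightarrow> 'a::comm_ring_1^'n^'n) \<Rightarrow> (nat \<Rightarrow> 'a^'n^'n) \<Rightarrow> bool" where
  "mahler_coeff_eq p a c \<longleftrightarrow>
     (\<forall>m. (\<Sum>k\<le>m. a k ** c (m - k)) = (if p dvd m then c (m div p) ** a 0 else 0))"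

lemma mahler_functional_eq_iff_coeff_eq:
  assumes "p \<ge> 1"
  shows "A ** F = mat_phi p F ** const_mat (coeff_mat A 0) \<longleftrightarrow>
         mahler_coeff_eq p (coeff_mat A) (coeff_mat F)"
proof -
  have "coeff_mat (mat_phi p F ** const_mat (coeff_mat A 0)) m =
        (if p dvd m then coeff_mat F (m div p) ** coeff_mat A 0 else 0)" for m
  proof -
    have "coeff_mat (mat_phi p F ** const_mat (coeff_mat A 0)) m =
          (\<Sum>k\<le>m. if k = m then coeff_mat (mat_phi p F) k ** coeff_mat A 0 else 0)"
      unfolding coeff_mat_mult coeff_mat_const_mat by (intro sum.cong) auto
    then show ?thesis using assms by (simp add: coeff_mat_mat_phi)
  qed
  then show ?thesis by (simp add: fps_mat_eq_iff coeff_mat_mult mahler_coeff_eq_def)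
qed

text \<open>The guard \<open>1 < p\<close> only serves termination: the recursion calls \<open>m div p\<close>.\<close>
function mahler_gauge_coeffs :: "nat \<Rightarrow> (nat \<Rightarrow> 'a::comm_ring_1^'n^'n) \<Rightarrow> nat \<Rightarrow> 'a^'n^'n" where
  "mahler_gauge_coeffs p a m =
     (if m = 0 then mat 1
      else matrix_inv (a 0) **
        ((if p dvd m \<and> 1 < p then mahler_gauge_coeffs p a (m div p) ** a 0 else 0)
         - (\<Sum>k=1..m. a k ** mahler_gauge_coeffs p a (m - k))))"
  by auto
termination by (relation "Wellfounded.measure (\<lambda>(p, a, m). m)") auto

declare mahler_gauge_coeffs.simps [simp del]

lemma mahler_gauge_coeffs_0 [simp]: "mahler_gauge_coeffs p a 0 = mat 1"
  by (simp add: mahler_gauge_coeffs.simps)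

lemma mahler_gauge_coeffs_nonzero:
  assumes "p \<ge> 2" and "m \<noteq> 0"
  shows "mahler_gauge_coeffs p a m = matrix_inv (a 0) **
    ((if p dvd m then mahler_gauge_coeffs p a (m div p) ** a 0 else 0)
     - (\<Sum>k=1..m. a k ** mahler_gauge_coeffs p a (m - k)))"
  using assms by (subst mahler_gauge_coeffs.simps) simp

lemma convolution_eq_iff_last_coeff:
  fixes a c :: "nat \<Rightarrow> 'a::comm_ring_1^'n^'n"
  assumes "invertible (a 0)"
  shows "(\<Sum>k\<le>m. a k ** c (m - k)) = R \<longleftrightarrow>
         c m = matrix_inv (a 0) ** (R - (\<Sum>k=1..m. a k ** c (m - k)))"
    (is "_ \<longleftrightarrow> _ = _ ** (R - ?S)")
proof -
  have "(\<Sum>k\<le>m. a k ** c (m - k)) = a 0 ** c m + ?S"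
    by (simp add: sum_atMost_split_first)
  then have "(\<Sum>k\<le>m. a k ** c (m - k)) = R \<longleftrightarrow> a 0 ** c m = R - ?S"
    by (simp only: eq_diff_eq)
  also have "\<dots> \<longleftrightarrow> c m = matrix_inv (a 0) ** (R - ?S)"
    using matrix_inv_mult_eq_iff[OF assms, of "R - ?S" "c m"] by (simp only: eq_commute)
  finally show ?thesis .
qed

lemma mahler_gauge_coeffs_unique:
  assumes "p \<ge> 2" and "invertible (a 0)"
    and "c 0 = mat 1" and "mahler_coeff_eq p a c"
  shows "c = mahler_gauge_coeffs p a"
proof
  fix m show "c m = mahler_gauge_coeffs p a m"
  proof (induction m rule: less_induct)
    case (less m)
    show ?case
    proof (cases "m = 0")
      case False
      have "(\<Sum>k\<le>m. a k ** c (m - k)) = (if p dvd m then c (m div p) ** a 0 else 0)"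
        using assms(4) unfolding mahler_coeff_eq_def by blast
      then have "c m = matrix_inv (a 0) **
          ((if p dvd m then c (m div p) ** a 0 else 0) - (\<Sum>k=1..m. a k ** c (m - k)))"
        by (simp only: convolution_eq_iff_last_coeff[of a, OF assms(2)])
      also have "(if p dvd m then c (m div p) ** a 0 else 0) =
          (if p dvd m then mahler_gauge_coeffs p a (m div p) ** a 0 else 0)"
        using less.IH[of "m div p"] False assms(1) by simp
      also have "(\<Sum>k=1..m. a k ** c (m - k)) = (\<Sum>k=1..m. a k ** mahler_gauge_coeffs p a (m - k))"
        using less.IH False by (intro sum.cong) auto
      finally show ?thesis
        by (simp only: mahler_gauge_coeffs_nonzero[OF assms(1) False])
    qed (use assms(3) in simp)
  qed
qed

lemma mahler_coeff_eq_gauge_coeffs: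
  assumes "p \<ge> 2" and "invertible (a 0)"
  shows "mahler_coeff_eq p a (mahler_gauge_coeffs p a)"
  unfolding mahler_coeff_eq_def
proof
  fix m show "(\<Sum>k\<le>m. a k ** mahler_gauge_coeffs p a (m - k)) =
      (if p dvd m then mahler_gauge_coeffs p a (m div p) ** a 0 else 0)"
  proof (cases "m = 0")
    case False
    show ?thesis
      by (simp only: convolution_eq_iff_last_coeff[of a, OF assms(2)]
          mahler_gauge_coeffs_nonzero[OF assms(1) False])
  qed simp
qed

lemma mahler_gauge_iff:
  assumes "p \<ge> 2" and "invertible (mat_at_infty A)"
  shows "(invertible F \<and> mat_at_infty F = mat 1 \<and>
          matrix_inv (mat_phi p F) ** A ** F = const_mat (mat_at_infty A)) \<longleftrightarrow>
         F = fps_mat (mahler_gauge_coeffs p (coeff_mat A))"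
proof -
  have A0: "invertible (coeff_mat A 0)"
    using assms(2) by (simp add: mat_at_infty_eq_coeff_mat)
  have "(mat_at_infty F = mat 1 \<and>
         matrix_inv (mat_phi p F) ** A ** F = const_mat (mat_at_infty A)) \<longleftrightarrow>
        (coeff_mat F 0 = mat 1 \<and> mahler_coeff_eq p (coeff_mat A) (coeff_mat F))"
  proof (cases "coeff_mat F 0 = mat 1")
    case True
    with assms(1) show ?thesis
      by (simp add: mat_at_infty_eq_coeff_mat mahler_gauge_eq_iff mahler_functional_eq_iff_coeff_eq)
  qed (simp add: mat_at_infty_eq_coeff_mat)
  also have "\<dots> \<longleftrightarrow> coeff_mat F = mahler_gauge_coeffs p (coeff_mat A)"
    using mahler_gauge_coeffs_unique[of p "coeff_mat A", OF assms(1) A0]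
      mahler_coeff_eq_gauge_coeffs[of p "coeff_mat A", OF assms(1) A0]
    by auto
  also have "\<dots> \<longleftrightarrow> F = fps_mat (mahler_gauge_coeffs p (coeff_mat A))"
    by (metis coeff_mat_fps_mat fps_mat_coeff_mat)
  finally show ?thesis
    using invertible_fps_mat_if_coeff_0 by (auto simp: mat_at_infty_eq_coeff_mat)
qed

section \<open>Geometric growth and convergence\<close>

definition mat_norm1 :: "'a::real_normed_vector^'n^'m \<Rightarrow> real" where
  "mat_norm1 M = (\<Sum>i\<in>UNIV. \<Sum>j\<in>UNIV. norm (M $ i $ j))"

lemma mat_norm1_nonneg [simp]: "0 \<le> mat_norm1 M"
  by (simp add: mat_norm1_def sum_nonneg)

lemma mat_norm1_0 [simp]: "mat_norm1 0 = 0"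
  by (simp add: mat_norm1_def)

lemma mat_norm1_uminus [simp]: "mat_norm1 (- M) = mat_norm1 M"
  by (simp add: mat_norm1_def)

lemma norm_row_le_mat_norm1: "(\<Sum>j\<in>UNIV. norm (M $ i $ j)) \<le> mat_norm1 M"
  unfolding mat_norm1_def
  by (rule member_le_sum[where f = "\<lambda>i. \<Sum>j\<in>UNIV. norm (M $ i $ j)"]) (auto intro: sum_nonneg)

lemma norm_entry_le_mat_norm1: "norm (M $ i $ j) \<le> mat_norm1 M"
  using member_le_sum[of j UNIV "\<lambda>j. norm (M $ i $ j)"] norm_row_le_mat_norm1[of M i]
  by simp

lemma mat_norm1_diff: "mat_norm1 (M - N) \<le> mat_norm1 M + mat_norm1 N"
  unfolding mat_norm1_def sum.distrib[symmetric]
  by (intro sum_mono) (simp add: norm_triangle_ineq4)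

lemma mat_norm1_sum: "mat_norm1 (\<Sum>k\<in>S. f k) \<le> (\<Sum>k\<in>S. mat_norm1 (f k))"
proof (induction S rule: infinite_finite_induct)
  case (insert x S)
  have "mat_norm1 (f x + sum f S) \<le> mat_norm1 (f x) + mat_norm1 (sum f S)"
    unfolding mat_norm1_def sum.distrib[symmetric]
    by (intro sum_mono) (simp add: norm_triangle_ineq)
  with insert show ?case by simp
qed (auto simp: mat_norm1_def)

lemma mat_norm1_mult:
  fixes M N :: "'a::real_normed_algebra_1^'n^'n"
  shows "mat_norm1 (M ** N) \<le> mat_norm1 M * mat_norm1 N"
proof -
  have "mat_norm1 (M ** N) \<le> (\<Sum>i\<in>UNIV. \<Sum>j\<in>UNIV. \<Sum>k\<in>UNIV. norm (M$i$k) * norm (N$k$j))"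
    unfolding mat_norm1_def matrix_matrix_mult_def
    by (intro sum_mono) (auto intro!: order.trans[OF norm_sum] sum_mono norm_mult_ineq)
  also have "\<dots> = (\<Sum>i\<in>UNIV. \<Sum>k\<in>UNIV. norm (M$i$k) * (\<Sum>j\<in>UNIV. norm (N$k$j)))"
    by (simp add: sum_distrib_left) (intro sum.cong refl sum.swap)
  also have "\<dots> \<le> (\<Sum>i\<in>UNIV. \<Sum>k\<in>UNIV. norm (M$i$k) * mat_norm1 N)"
    by (intro sum_mono mult_left_mono norm_row_le_mat_norm1) auto
  also have "\<dots> = mat_norm1 M * mat_norm1 N"
    by (simp add: mat_norm1_def sum_distrib_right)
  finally show ?thesis .
qed

definition geometric_growth :: "(nat \<Rightarrow> 'a::real_normed_vector^'n^'m) \<Rightarrow> bool" where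
  "geometric_growth c \<longleftrightarrow> (\<exists>K B. \<forall>k. mat_norm1 (c k) \<le> K * B ^ k)"

lemma geometric_bound_normalize:
  fixes K B :: real
  assumes "x \<le> K * B ^ k"
  shows "x \<le> \<bar>K\<bar> * max 1 \<bar>B\<bar> ^ k"
proof -
  have "K * B ^ k \<le> \<bar>K\<bar> * \<bar>B\<bar> ^ k" by (metis abs_ge_self abs_mult power_abs)
  also have "\<dots> \<le> \<bar>K\<bar> * max 1 \<bar>B\<bar> ^ k" by (intro mult_left_mono power_mono) auto
  finally show ?thesis using assms by linarith
qed

lemma geometric_growthE:
  assumes "geometric_growth c"
  obtains K B where "0 \<le> K" "1 \<le> B" "\<And>k. mat_norm1 (c k) \<le> K * B ^ k"
  using assms geometric_bound_normalize unfolding geometric_growth_def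
  by (metis abs_ge_zero max.cobounded1)

lemma sum_power_le_twice:
  fixes x :: real
  assumes "0 \<le> x" "x \<le> 1/2"
  shows "(\<Sum>k=1..m. x ^ k) \<le> 2 * x"
proof (induction m)
  case (Suc m)
  have "(\<Sum>k=1..Suc m. x ^ k) = (\<Sum>k=0..m. x ^ Suc k)"
    using sum.shift_bounds_cl_Suc_ivl[of "\<lambda>k. x ^ k" 0 m] by simp
  also have "\<dots> = x + x * (\<Sum>k=1..m. x ^ k)"
    by (simp add: atLeast0AtMost sum_atMost_split_first sum_distrib_left)
  also have "\<dots> \<le> x + x * (2 * x)"
    using Suc assms by (intro add_left_mono mult_left_mono) auto
  also have "\<dots> \<le> 2 * x"
    using mult_left_mono[of "2 * x" 1 x] assms by simp
  finally show ?case .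
qed (use assms in simp)

lemma convolution_power_bound:
  fixes a R M :: real
  assumes "0 \<le> a" "0 \<le> R" "0 < M" "2 * R \<le> M" "4 * a * R \<le> M"
  shows "a * (\<Sum>k=1..m. R ^ k * M ^ (m - k)) \<le> M ^ m / 2"
proof -
  define x where "x = R / M"
  have x: "0 \<le> x" "x \<le> 1/2" using assms by (auto simp: x_def field_simps)
  have "R ^ k * M ^ (m - k) = M ^ m * x ^ k" if "k \<le> m" for k
    using that assms(3)
    by (simp add: x_def power_divide power_add[symmetric] field_simps)
  then have "a * (\<Sum>k=1..m. R ^ k * M ^ (m - k)) = a * M ^ m * (\<Sum>k=1..m. x ^ k)"
    by (simp add: sum_distrib_left mult.assoc)
  also have "\<dots> \<le> a * M ^ m * (2 * x)"
    using assms x sum_power_le_twice[OF x] by (intro mult_left_mono) auto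
  also have "\<dots> = M ^ m * (2 * a * R / M)" by (simp add: x_def)
  also have "\<dots> \<le> M ^ m * (1 / 2)"
    using assms by (intro mult_left_mono) (auto simp: field_simps)
  finally show ?thesis by simp
qed

lemma power_div_bound:
  fixes d M :: real
  assumes "0 \<le> d" "1 \<le> M" "2 * d \<le> M" "p \<ge> 2" "m \<ge> 1"
  shows "d * M ^ (m div p) \<le> M ^ m / 2"
proof -
  have "m div p < m" using assms by simp
  then have "M ^ Suc (m div p) \<le> M ^ m" using assms(2) by (intro power_increasing) auto
  moreover have "2 * d * M ^ (m div p) \<le> M * M ^ (m div p)"
    using assms by (intro mult_right_mono) auto
  ultimately show ?thesis by simp
qed

text \<open>A majorant argument: the convolution term is damped by a geometric weight and the
  term with index \<open>m div p\<close> lags far behind, so both fit into half of \<open>M ^ m\<close>.\<close>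
lemma geometric_bound_from_recurrence:
  fixes b :: "nat \<Rightarrow> real"
  assumes b: "\<And>m. 0 \<le> b m" and "0 \<le> a" "0 \<le> d" "0 \<le> R" "p \<ge> 2"
    and rec: "\<And>m. m \<ge> 1 \<Longrightarrow> b m \<le> a * (\<Sum>k=1..m. R ^ k * b (m - k)) + d * b (m div p)"
  obtains M where "\<And>m. b m \<le> b 0 * M ^ m"
proof -
  define M where "M = max 1 (max (2 * R) (max (4 * a * R) (2 * d)))"
  have M: "1 \<le> M" "2 * R \<le> M" "4 * a * R \<le> M" "2 * d \<le> M"
    by (auto simp: M_def)
  have "b m \<le> b 0 * M ^ m" for m
  proof (induction m rule: less_induct)
    case (less m)
    show ?case
    proof (cases "m = 0")
      case False
      have "b m \<le> a * (\<Sum>k=1..m. R ^ k * b (m - k)) + d * b (m div p)"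
        using rec False by simp
      also have "\<dots> \<le> a * (\<Sum>k=1..m. R ^ k * (b 0 * M ^ (m - k))) + d * (b 0 * M ^ (m div p))"
      proof (intro add_mono mult_left_mono sum_mono)
        show "b (m - k) \<le> b 0 * M ^ (m - k)" if "k \<in> {1..m}" for k
          using that less.IH[of "m - k"] by simp
        show "b (m div p) \<le> b 0 * M ^ (m div p)"
          using less.IH False assms(5) by simp
      qed (use assms(2-4) in auto)
      also have "\<dots> = b 0 * (a * (\<Sum>k=1..m. R ^ k * M ^ (m - k)) + d * M ^ (m div p))"
        by (simp add: algebra_simps sum_distrib_left)
      also have "\<dots> \<le> b 0 * (M ^ m / 2 + M ^ m / 2)"
        using False M assms(2-5) b[of 0]
        by (intro mult_left_mono add_mono convolution_power_bound power_div_bound) auto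
      finally show ?thesis by simp
    qed simp
  qed
  then show thesis by (rule that)
qed

lemma fps_coeff_bound_if_conv_radius_pos:
  fixes f :: "'a::{banach, real_normed_div_algebra} fps"
  assumes "0 < fps_conv_radius f"
  obtains K B where "0 \<le> K" "0 \<le> B" "\<And>k. norm (f $ k) \<le> K * B ^ k"
proof -
  obtain r :: real where r: "0 < r" "ereal r < fps_conv_radius f"
    using ereal_dense2[OF assms] by (metis ereal_less(2) less_ereal.simps(1) zero_ereal_def)
  have "summable (\<lambda>n. norm (f $ n * of_real r ^ n))"
    using r by (intro abs_summable_in_conv_radius) (simp add: fps_conv_radius_def)
  then have "Bseq (\<lambda>n. norm (f $ n * of_real r ^ n))"
    by (rule convergent_imp_Bseq[OF convergentI[OF summable_LIMSEQ_zero]])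
  then obtain K where K: "K > 0" "\<And>n. norm (f $ n) * r ^ n \<le> K"
    using r(1) by (auto simp: Bseq_def norm_mult norm_power)
  have "norm (f $ k) \<le> K * (1 / r) ^ k" for k
    using K(2)[of k] r(1) by (simp add: field_simps power_divide)
  with K r(1) show thesis by (intro that[of K "1 / r"]) auto
qed

lemma fps_conv_radius_ge_if_coeff_bound:
  fixes f :: "'a::{banach, real_normed_div_algebra} fps"
  assumes "0 < B" and "\<And>k. norm (f $ k) \<le> K * B ^ k"
  shows "ereal (1 / B) \<le> fps_conv_radius f"
  unfolding fps_conv_radius_def
proof (rule conv_radius_geI_ex')
  fix s :: real assume s: "0 < s" "ereal s < ereal (1 / B)"
  then have Bs: "0 \<le> B * s" "B * s < 1" using assms(1) by (auto simp: field_simps)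
  show "summable (\<lambda>n. f $ n * of_real s ^ n)"
  proof (rule summable_comparison_test)
    show "\<exists>N. \<forall>n\<ge>N. norm (f $ n * of_real s ^ n) \<le> K * (B * s) ^ n"
      using assms(2) s(1) by (auto simp: norm_mult norm_power power_mult_distrib intro!: mult_right_mono)
    show "summable (\<lambda>n. K * (B * s) ^ n)"
      using Bs by (intro summable_mult summable_geometric) simp
  qed
qed

lemma fps_conv_radius_lower_bound:
  assumes "geometric_growth (coeff_mat M)"
  obtains r where "0 < r" "r \<le> 1" "\<And>i j. ereal r \<le> fps_conv_radius (ent M i j)"
proof -
  obtain K B where KB: "1 \<le> B" "\<And>k. mat_norm1 (coeff_mat M k) \<le> K * B ^ k"
    using geometric_growthE[OF assms] by blast
  have "norm (ent M i j $ k) \<le> K * B ^ k" for i j k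
    using norm_entry_le_mat_norm1[of "coeff_mat M k" i j] KB(2)[of k] order.trans
    unfolding coeff_mat_def vec_lambda_beta by blast
  then have "ereal (1 / B) \<le> fps_conv_radius (ent M i j)" for i j
    using KB(1) by (intro fps_conv_radius_ge_if_coeff_bound) auto
  with KB(1) show thesis by (intro that[of "1 / B"]) auto
qed

lemma convergent_mat_iff_geometric_growth:
  "convergent_mat M \<longleftrightarrow> geometric_growth (coeff_mat M)"
proof
  assume "convergent_mat M"
  then have "\<forall>i j. \<exists>K B. 0 \<le> K \<and> 0 \<le> B \<and> (\<forall>k. norm (ent M i j $ k) \<le> K * B ^ k)"
    unfolding convergent_mat_def convergent_fps_def
    by (metis fps_coeff_bound_if_conv_radius_pos)
  then obtain K B where KB: "\<And>i j. 0 \<le> K i j" "\<And>i j. 0 \<le> B i j"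
      "\<And>i j k. norm (ent M i j $ k) \<le> K i j * B i j ^ k"
    by metis
  define B' where "B' = (\<Sum>i\<in>UNIV. \<Sum>j\<in>UNIV. B i j)"
  have "B i j \<le> B'" for i j
    using member_le_sum[of j UNIV "B i"] member_le_sum[of i UNIV "\<lambda>i. \<Sum>j\<in>UNIV. B i j"] KB(2)
    by (fastforce simp: B'_def intro: sum_nonneg)
  then have "norm (ent M i j $ k) \<le> K i j * B' ^ k" for i j k
    using KB order.trans by (metis mult_left_mono power_mono)
  then have "mat_norm1 (coeff_mat M k) \<le> (\<Sum>i\<in>UNIV. \<Sum>j\<in>UNIV. K i j) * B' ^ k" for k
    unfolding mat_norm1_def coeff_mat_def sum_distrib_right by (simp add: sum_mono)
  then show "geometric_growth (coeff_mat M)"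
    unfolding geometric_growth_def by blast
next
  assume "geometric_growth (coeff_mat M)"
  then obtain r where "0 < r" "\<And>i j. ereal r \<le> fps_conv_radius (ent M i j)"
    using fps_conv_radius_lower_bound by blast
  then show "convergent_mat M"
    unfolding convergent_mat_def convergent_fps_def
    by (meson ereal_less(2) order.strict_trans2 zero_ereal_def)
qed

lemma mat_norm1_convolution_le:
  fixes a c :: "nat \<Rightarrow> 'a::real_normed_algebra_1^'n^'n"
  assumes "\<And>k. mat_norm1 (a k) \<le> K * B ^ k"
  shows "mat_norm1 (\<Sum>k=1..m. a k ** c (m - k)) \<le> K * (\<Sum>k=1..m. B ^ k * mat_norm1 (c (m - k)))"
proof -
  have "mat_norm1 (\<Sum>k=1..m. a k ** c (m - k)) \<le> (\<Sum>k=1..m. mat_norm1 (a k ** c (m - k)))"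
    by (rule mat_norm1_sum)
  also have "\<dots> \<le> (\<Sum>k=1..m. K * B ^ k * mat_norm1 (c (m - k)))"
    by (intro sum_mono order.trans[OF mat_norm1_mult] mult_right_mono assms) auto
  finally show ?thesis by (simp add: sum_distrib_left mult.assoc)
qed

lemma geometric_growth_mahler_gauge_coeffs:
  fixes a :: "nat \<Rightarrow> 'a::{real_normed_algebra_1, comm_ring_1}^'n^'n"
  assumes "p \<ge> 2" and "invertible (a 0)" and "geometric_growth a"
  shows "geometric_growth (mahler_gauge_coeffs p a)"
proof -
  obtain K B where KB: "0 \<le> K" "1 \<le> B" "\<And>k. mat_norm1 (a k) \<le> K * B ^ k"
    using geometric_growthE[OF assms(3)] by blast
  define c where "c = mahler_gauge_coeffs p a"
  define n where "n = mat_norm1 (matrix_inv (a 0))"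
  have "mat_norm1 (c m) \<le> n * K * (\<Sum>k=1..m. B ^ k * mat_norm1 (c (m - k)))
      + n * mat_norm1 (a 0) * mat_norm1 (c (m div p))" if "m \<ge> 1" for m
  proof -
    have "c m = matrix_inv (a 0) ** ((if p dvd m then c (m div p) ** a 0 else 0)
        - (\<Sum>k=1..m. a k ** c (m - k)))"
      using that unfolding c_def by (intro mahler_gauge_coeffs_nonzero[OF assms(1)]) simp
    then have "mat_norm1 (c m) \<le> n * mat_norm1 ((if p dvd m then c (m div p) ** a 0 else 0)
        - (\<Sum>k=1..m. a k ** c (m - k)))"
      unfolding n_def by (simp only: mat_norm1_mult)
    also have "\<dots> \<le> n * (mat_norm1 (a 0) * mat_norm1 (c (m div p))
        + K * (\<Sum>k=1..m. B ^ k * mat_norm1 (c (m - k))))"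
      using mat_norm1_mult[of "c (m div p)" "a 0"]
      by (intro mult_left_mono order.trans[OF mat_norm1_diff] add_mono mat_norm1_convolution_le KB)
        (auto simp: n_def mult.commute)
    finally show ?thesis by (simp add: algebra_simps)
  qed
  then obtain M where "\<And>m. mat_norm1 (c m) \<le> mat_norm1 (c 0) * M ^ m"
    using geometric_bound_from_recurrence[of "\<lambda>m. mat_norm1 (c m)" "n * K" "n * mat_norm1 (a 0)" B p]
      KB assms(1) by (auto simp: n_def)
  then show ?thesis
    unfolding geometric_growth_def c_def by blast
qed

lemma geometric_growth_inverse_coeffs:
  fixes c :: "nat \<Rightarrow> 'a::{real_normed_algebra_1, comm_ring_1}^'n^'n"
  assumes "geometric_growth c"
  shows "geometric_growth (inverse_coeffs c)"
proof -
  obtain K B where KB: "0 \<le> K" "1 \<le> B" "\<And>k. mat_norm1 (c k) \<le> K * B ^ k"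
    using geometric_growthE[OF assms] by blast
  have "mat_norm1 (inverse_coeffs c m) \<le>
      K * (\<Sum>k=1..m. B ^ k * mat_norm1 (inverse_coeffs c (m - k))) + 0 * mat_norm1 (inverse_coeffs c (m div 2))"
    if "m \<ge> 1" for m
    using that mat_norm1_convolution_le[OF KB(3), of "inverse_coeffs c" m]
    by (subst inverse_coeffs.simps) simp
  then obtain M where "\<And>m. mat_norm1 (inverse_coeffs c m) \<le> mat_norm1 (inverse_coeffs c 0) * M ^ m"
    using geometric_bound_from_recurrence[of "\<lambda>m. mat_norm1 (inverse_coeffs c m)" K 0 B 2] KB
    by auto
  then show ?thesis
    unfolding geometric_growth_def by blast
qed

lemma GL_convergent_if_coeff_0:
  assumes "convergent_mat F" and "coeff_mat F 0 = mat 1"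
  shows "GL_convergent F"
proof -
  define G where "G = fps_mat (inverse_coeffs (coeff_mat F))"
  have "convergent_mat G"
    using assms(1) geometric_growth_inverse_coeffs
    by (simp add: G_def convergent_mat_iff_geometric_growth)
  with assms show ?thesis
    unfolding GL_convergent_def G_def using fps_mat_inverse_coeffs[OF assms(2)] by blast
qed

lemma GL_convergent_mahler_gauge:
  assumes "p \<ge> 2" and "fuchsian_at_infty A"
  shows "GL_convergent (fps_mat (mahler_gauge_coeffs p (coeff_mat A)))"
proof (rule GL_convergent_if_coeff_0)
  have "invertible (coeff_mat A 0)" and "geometric_growth (coeff_mat A)"
    using assms(2)
    by (simp_all add: fuchsian_at_infty_def mat_at_infty_eq_coeff_mat convergent_mat_iff_geometric_growth)
  then show "convergent_mat (fps_mat (mahler_gauge_coeffs p (coeff_mat A)))"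
    using geometric_growth_mahler_gauge_coeffs[OF assms(1)]
    by (simp add: convergent_mat_iff_geometric_growth)
qed simp

section \<open>Meromorphic continuation\<close>

definition mat_meromorphic_on :: "(complex \<Rightarrow> complex^'n^'m) \<Rightarrow> complex set \<Rightarrow> bool" where
  "mat_meromorphic_on X S \<longleftrightarrow> (\<forall>i j. (\<lambda>w. X w $ i $ j) meromorphic_on S)"

lemma mat_meromorphic_on_subset:
  "mat_meromorphic_on X S \<Longrightarrow> T \<subseteq> S \<Longrightarrow> mat_meromorphic_on X T"
  unfolding mat_meromorphic_on_def using meromorphic_on_subset by blast

lemma mat_meromorphic_on_mult:
  assumes "mat_meromorphic_on X S" "mat_meromorphic_on Y S"
  shows "mat_meromorphic_on (\<lambda>w. X w ** Y w) S"
  using assms unfolding mat_meromorphic_on_def matrix_matrix_mult_def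
  by (auto intro!: meromorphic_intros)

lemma mat_meromorphic_on_const: "mat_meromorphic_on (\<lambda>w. C) S"
  by (auto simp: mat_meromorphic_on_def)

lemma mat_meromorphic_on_compose:
  assumes "mat_meromorphic_on X A" "f analytic_on B" "f ` B \<subseteq> A"
  shows "mat_meromorphic_on (\<lambda>w. X (f w)) B"
  using assms unfolding mat_meromorphic_on_def
  by (auto intro: meromorphic_on_compose[where g = "\<lambda>w. X w $ _ $ _"])

lemma meromorphic_on_det:
  assumes "mat_meromorphic_on X S"
  shows "(\<lambda>w. det (X w)) meromorphic_on S"
  using assms unfolding mat_meromorphic_on_def det_def by (auto intro!: meromorphic_intros)

text \<open>Unlike \<^const>\<open>matrix_inv\<close>, which is defined by choice, this is an explicit formula,
  so its entries are meromorphic whenever those of the matrix are.\<close>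
definition cramer_inverse :: "'a::field^'n^'n \<Rightarrow> 'a^'n^'n" where
  "cramer_inverse M = (\<chi> k j. det (\<chi> i l. if l = k then mat 1 $ i $ j else M $ i $ l) / det M)"

lemma matrix_mul_cramer_inverse:
  fixes M :: "'a::field^'n^'n"
  assumes "det M \<noteq> 0"
  shows "M ** cramer_inverse M = mat 1"
proof -
  have "M *v (\<chi> k. cramer_inverse M $ k $ j) = (\<chi> i. mat 1 $ i $ j)" for j
    unfolding cramer[OF assms] by (simp add: cramer_inverse_def cong: if_cong)
  then show ?thesis
    by (simp add: vec_eq_iff matrix_matrix_mult_def matrix_vector_mult_def)
qed

lemma cramer_inverse_mul:
  fixes M :: "'a::field^'n^'n"
  assumes "det M \<noteq> 0"
  shows "cramer_inverse M ** M = mat 1"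
  using matrix_mul_cramer_inverse[OF assms] matrix_left_right_inverse by blast

lemma mat_meromorphic_on_cramer_inverse:
  assumes "mat_meromorphic_on X S"
  shows "mat_meromorphic_on (\<lambda>w. cramer_inverse (X w)) S"
proof -
  have "(\<lambda>w. det (\<chi> i l. if l = k then mat 1 $ i $ j else X w $ i $ l)) meromorphic_on S" for k j
  proof (rule meromorphic_on_det, unfold mat_meromorphic_on_def vec_lambda_beta, intro allI)
    fix i l
    show "(\<lambda>w. if l = k then mat 1 $ i $ j else X w $ i $ l) meromorphic_on S"
      using assms by (cases "l = k") (auto simp: mat_meromorphic_on_def)
  qed
  then show ?thesis
    using meromorphic_on_det[OF assms] unfolding cramer_inverse_def mat_meromorphic_on_def
    by (auto intro!: meromorphic_intros)
qed

lemma meromorphic_on_eventually_eq_propagate: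
  assumes "f meromorphic_on S" "g meromorphic_on S" "open S" "connected S" "z\<^sub>0 \<in> S"
    and "eventually (\<lambda>w. f w = g w) (at z\<^sub>0)" and "z \<in> S"
  shows "eventually (\<lambda>w. f w = g w) (at z)"
proof -
  have h: "(\<lambda>w. f w - g w) meromorphic_on S"
    using assms(1,2) by (intro meromorphic_intros)
  have "\<not> eventually (\<lambda>w. f w - g w \<noteq> 0) (cosparse S)"
  proof
    assume "eventually (\<lambda>w. f w - g w \<noteq> 0) (cosparse S)"
    then have "eventually (\<lambda>w. f w - g w \<noteq> 0) (at z\<^sub>0)"
      using assms(5) by (rule eventually_cosparse_imp_eventually_at)
    with assms(6) have "eventually (\<lambda>_. False) (at z\<^sub>0)"
      by eventually_elim simp
    then show False by simp
  qed
  then have "eventually (\<lambda>w. f w - g w = 0) (cosparse S)"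
    using meromorphic_imp_constant_or_avoid[OF h assms(3,4)] by blast
  then show ?thesis
    using assms(7) by (auto dest: eventually_cosparse_imp_eventually_at elim: eventually_mono)
qed

lemma remove_sings_eq_if_eventually_eq:
  assumes "f meromorphic_on S" "g meromorphic_on S" "open S" "connected S" "z\<^sub>0 \<in> S"
    and "eventually (\<lambda>w. f w = g w) (at z\<^sub>0)" and "z \<in> S"
  shows "remove_sings f z = remove_sings g z"
  using meromorphic_on_eventually_eq_propagate[OF assms] by (rule remove_sings_cong) simp

text \<open>The functions \<open>f k\<close> may still differ at isolated points; \<^const>\<open>remove_sings\<close> makes the
  glued function independent of the domain a point is taken from.\<close>
lemma meromorphic_on_Union_chain:
  fixes f :: "nat \<Rightarrow> complex \<Rightarrow> complex"
  assumes U: "incseq U" "\<And>k. open (U k)" "\<And>k. connected (U k)" "z\<^sub>0 \<in> U 0"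
    and f: "\<And>k. f k meromorphic_on U k" "\<And>k. eventually (\<lambda>w. f k w = f 0 w) (at z\<^sub>0)"
  obtains g where "g meromorphic_on (\<Union>k. U k)" "eventually (\<lambda>w. g w = f 0 w) (at z\<^sub>0)"
proof -
  define g where "g w = remove_sings (f (LEAST k. w \<in> U k)) w" for w
  have g_eq: "g w = remove_sings (f K) w" if w: "w \<in> U K" for w K
  proof -
    define k where "k = (LEAST k. w \<in> U k)"
    have k: "k \<le> K" "w \<in> U k"
      unfolding k_def using w by (auto intro: Least_le LeastI)
    have "U k \<subseteq> U K" "z\<^sub>0 \<in> U k"
      using U(1,4) k(1) incseqD[OF U(1), of 0 k] by (auto dest: incseqD)
    moreover have "eventually (\<lambda>w. f k w = f K w) (at z\<^sub>0)"
      using f(2)[of k] f(2)[of K] by eventually_elim simp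
    ultimately have "remove_sings (f k) w = remove_sings (f K) w"
      using U(2,3) k(2) f(1)[of k] meromorphic_on_subset[OF f(1)[of K]]
      by (intro remove_sings_eq_if_eventually_eq) auto
    then show ?thesis by (simp add: g_def k_def)
  qed
  have "g meromorphic_on {z}" if "z \<in> U K" for z K
  proof -
    have "eventually (\<lambda>w. w \<in> U K) (at z)"
      using that U(2) by (intro eventually_at_in_open') auto
    then have "eventually (\<lambda>w. g w = remove_sings (f K) w) (at z)"
      by eventually_elim (rule g_eq)
    moreover have "remove_sings (f K) meromorphic_on {z}"
      using that f(1) by (meson empty_subsetI insert_subset meromorphic_on_subset remove_sings_meromorphic)
    ultimately show ?thesis
      using meromorphic_on_cong[of "{z}" g "remove_sings (f K)" "{z}"] by blast
  qed
  then have "g meromorphic_on (\<Union>k. U k)"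
    by (subst meromorphic_on_meromorphic_at) blast
  moreover have "eventually (\<lambda>w. g w = f 0 w) (at z\<^sub>0)"
  proof -
    have "eventually (\<lambda>w. w \<in> U 0) (at z\<^sub>0)"
      using U(2,4) by (intro eventually_at_in_open') auto
    moreover have "eventually (\<lambda>w. remove_sings (f 0) w = f 0 w) (at z\<^sub>0)"
      using f(1) U(4)
      by (intro eventually_remove_sings_eq_at meromorphic_on_isolated_singularity)
        (meson empty_subsetI insert_subset meromorphic_on_subset)
    ultimately show ?thesis by eventually_elim (simp add: g_eq)
  qed
  ultimately show thesis by (rule that)
qed

lemma mat_meromorphic_on_Union_chain:
  fixes f :: "nat \<Rightarrow> complex \<Rightarrow> complex^'n^'m"
  assumes U: "incseq U" "\<And>k. open (U k)" "\<And>k. connected (U k)" "z\<^sub>0 \<in> U 0"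
    and f: "\<And>k. mat_meromorphic_on (f k) (U k)" "\<And>k. eventually (\<lambda>w. f k w = f 0 w) (at z\<^sub>0)"
  obtains g where "mat_meromorphic_on g (\<Union>k. U k)" "eventually (\<lambda>w. g w = f 0 w) (at z\<^sub>0)"
proof -
  have "\<exists>g. g meromorphic_on (\<Union>k. U k) \<and> eventually (\<lambda>w. g w = f 0 w $ i $ j) (at z\<^sub>0)" for i j
  proof (rule meromorphic_on_Union_chain[OF U, where f = "\<lambda>k w. f k w $ i $ j"])
    show "(\<lambda>w. f k w $ i $ j) meromorphic_on U k" for k
      using f(1) by (simp add: mat_meromorphic_on_def)
    show "eventually (\<lambda>w. f k w $ i $ j = f 0 w $ i $ j) (at z\<^sub>0)" for k
      using f(2)[of k] by eventually_elim simp
  qed blast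
  then obtain G where G: "\<And>i j. G i j meromorphic_on (\<Union>k. U k)"
      "\<And>i j. eventually (\<lambda>w. G i j w = f 0 w $ i $ j) (at z\<^sub>0)"
    by metis
  have "eventually (\<lambda>w. \<forall>i j. G i j w = f 0 w $ i $ j) (at z\<^sub>0)"
    using G(2) by (intro eventually_all_finite) auto
  then have "eventually (\<lambda>w. (\<chi> i j. G i j w) = f 0 w) (at z\<^sub>0)"
    by eventually_elim (simp add: vec_eq_iff)
  moreover have "mat_meromorphic_on (\<lambda>w. \<chi> i j. G i j w) (\<Union>k. U k)"
    using G(1) by (simp add: mat_meromorphic_on_def)
  ultimately show thesis using that by blast
qed

lemma mem_ball_root_iff:
  fixes w :: "'a::real_normed_vector"
  assumes "0 < n"
  shows "w \<in> ball 0 (root n r) \<longleftrightarrow> norm w ^ n < r"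
proof -
  have "w \<in> ball 0 (root n r) \<longleftrightarrow> root n (norm w ^ n) < root n r"
    using assms by (simp add: real_root_power_cancel)
  also have "\<dots> \<longleftrightarrow> norm w ^ n < r"
    using assms by simp
  finally show ?thesis .
qed

definition mahler_disk :: "nat \<Rightarrow> real \<Rightarrow> nat \<Rightarrow> complex set" where
  "mahler_disk p r k = ball 0 (root (p ^ k) r)"

lemma mem_mahler_disk_iff:
  "p \<ge> 1 \<Longrightarrow> w \<in> mahler_disk p r k \<longleftrightarrow> norm w ^ (p ^ k) < r"
  unfolding mahler_disk_def by (intro mem_ball_root_iff) simp

lemma mahler_disk_0 [simp]: "mahler_disk p r 0 = ball 0 r"
  by (simp add: mahler_disk_def)

lemma power_mem_mahler_disk:
  "p \<ge> 1 \<Longrightarrow> w \<in> mahler_disk p r (Suc k) \<Longrightarrow> w ^ p \<in> mahler_disk p r k"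
  by (simp add: mem_mahler_disk_iff norm_power power_mult[symmetric] mult.commute)

lemma mahler_disk_subset_ball:
  assumes "p \<ge> 1" "r \<le> 1"
  shows "mahler_disk p r k \<subseteq> ball 0 1"
proof
  fix w assume "w \<in> mahler_disk p r k"
  then have "norm w ^ (p ^ k) < 1 ^ (p ^ k)" using assms by (simp add: mem_mahler_disk_iff)
  then show "w \<in> ball 0 1" by (simp add: power_less_imp_less_base)
qed

lemma incseq_mahler_disk:
  assumes "p \<ge> 1" "r \<le> 1"
  shows "incseq (mahler_disk p r)"
proof (intro monoI subsetI)
  fix k K w assume "k \<le> K" "w \<in> mahler_disk p r k"
  moreover from this have "norm w \<le> 1" using mahler_disk_subset_ball[OF assms] by fastforce
  moreover have "p ^ k \<le> p ^ K" using assms(1) \<open>k \<le> K\<close> by (intro power_increasing) auto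
  ultimately have "norm w ^ (p ^ K) \<le> norm w ^ (p ^ k)"
    by (metis norm_ge_zero power_decreasing)
  with \<open>w \<in> mahler_disk p r k\<close> assms(1) show "w \<in> mahler_disk p r K"
    by (simp add: mem_mahler_disk_iff)
qed

lemma Union_mahler_disk:
  assumes "p \<ge> 2" "0 < r" "r \<le> 1"
  shows "(\<Union>k. mahler_disk p r k) = ball 0 1"
proof
  show "(\<Union>k. mahler_disk p r k) \<subseteq> ball 0 1"
    using mahler_disk_subset_ball[of p r] assms by auto
  show "ball 0 1 \<subseteq> (\<Union>k. mahler_disk p r k)"
  proof
    fix w :: complex assume w: "w \<in> ball 0 1"
    then obtain k where k: "norm w ^ k < r"
      using real_arch_pow_inv[OF assms(2)] by auto
    have "k < 2 ^ k" by (rule less_exp)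
    also have "\<dots> \<le> p ^ k" using assms(1) by (intro power_mono) auto
    finally have "k \<le> p ^ k" by simp
    with w have "norm w ^ (p ^ k) \<le> norm w ^ k"
      by (intro power_decreasing) auto
    with k assms(1) have "w \<in> mahler_disk p r k" by (simp add: mem_mahler_disk_iff)
    then show "w \<in> (\<Union>k. mahler_disk p r k)" by blast
  qed
qed

lemma filterlim_power_at_0:
  assumes "p \<ge> 1"
  shows "filterlim (\<lambda>w::complex. w ^ p) (at 0) (at 0)"
proof (rule filterlim_atI)
  show "((\<lambda>w::complex. w ^ p) \<longlongrightarrow> 0) (at 0)"
    using assms by (auto intro!: tendsto_eq_intros)
  show "eventually (\<lambda>w::complex. w ^ p \<noteq> 0) (at 0)"
    using eventually_neq_at_within[of 0 0 UNIV] by eventually_elim simp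
qed

text \<open>Solving the functional equation \<open>a(w) f(w) = f(w\<^sup>p) C\<close> for \<open>f(w)\<close> expresses \<open>f\<close> on
  the disk of radius \<open>\<rho>\<^sup>1\<^sup>/\<^sup>p\<close> by its values on the disk of radius \<open>\<rho>\<close>.\<close>
primrec mahler_continuation ::
  "nat \<Rightarrow> (complex \<Rightarrow> complex^'n^'n) \<Rightarrow> complex^'n^'n \<Rightarrow> (complex \<Rightarrow> complex^'n^'n) \<Rightarrow>
   nat \<Rightarrow> complex \<Rightarrow> complex^'n^'n" where
  "mahler_continuation p a C f 0 = f"
| "mahler_continuation p a C f (Suc k) =
     (\<lambda>w. cramer_inverse (a w) ** mahler_continuation p a C f k (w ^ p) ** C)"

lemma mahler_continuation_eventually_eq:
  assumes "p \<ge> 1"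
    and "eventually (\<lambda>w. a w ** f w = f (w ^ p) ** C \<and> det (a w) \<noteq> 0) (at 0)"
  shows "eventually (\<lambda>w. mahler_continuation p a C f k w = f w) (at 0)"
proof (induction k)
  case (Suc k)
  have "eventually (\<lambda>w. mahler_continuation p a C f k (w ^ p) = f (w ^ p)) (at 0)"
    using eventually_compose_filterlim[OF Suc.IH filterlim_power_at_0[OF assms(1)]] .
  with assms(2) show ?case
  proof eventually_elim
    case (elim w)
    then have det: "det (a w) \<noteq> 0" by simp
    have "mahler_continuation p a C f (Suc k) w = cramer_inverse (a w) ** (f (w ^ p) ** C)"
      using elim(2) by (simp add: matrix_mul_assoc)
    also have "f (w ^ p) ** C = a w ** f w"
      using elim(1) by simp
    also have "cramer_inverse (a w) ** (a w ** f w) = f w"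
      using det by (simp add: matrix_mul_assoc cramer_inverse_mul)
    finally show ?case .
  qed
qed simp

lemma mat_meromorphic_on_mahler_continuation:
  assumes "p \<ge> 1" "r \<le> 1"
    and a: "mat_meromorphic_on a (ball 0 1)" and f: "mat_meromorphic_on f (ball 0 r)"
  shows "mat_meromorphic_on (mahler_continuation p a C f k) (mahler_disk p r k)"
proof (induction k)
  case (Suc k)
  have "mat_meromorphic_on (\<lambda>w. mahler_continuation p a C f k (w ^ p)) (mahler_disk p r (Suc k))"
    using power_mem_mahler_disk[OF assms(1)]
    by (intro mat_meromorphic_on_compose[OF Suc.IH]) (auto intro!: analytic_intros)
  moreover have "mat_meromorphic_on (\<lambda>w. cramer_inverse (a w)) (mahler_disk p r (Suc k))"
    by (intro mat_meromorphic_on_cramer_inverse mat_meromorphic_on_subset[OF a]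
        mahler_disk_subset_ball assms)
  ultimately show ?case
    by simp (intro mat_meromorphic_on_mult mat_meromorphic_on_const)
qed (simp add: f)

lemma mahler_meromorphic_continuation:
  fixes a f :: "complex \<Rightarrow> complex^'n^'n"
  assumes p: "p \<ge> 2" and r: "0 < r" "r \<le> 1"
    and a: "mat_meromorphic_on a (ball 0 1)" and f: "mat_meromorphic_on f (ball 0 r)"
    and eq: "eventually (\<lambda>w. a w ** f w = f (w ^ p) ** C \<and> det (a w) \<noteq> 0) (at 0)"
  obtains g where "mat_meromorphic_on g (ball 0 1)" "eventually (\<lambda>w. g w = f w) (at 0)"
proof -
  have p1: "p \<ge> 1" using p by simp
  obtain g where "mat_meromorphic_on g (\<Union>k. mahler_disk p r k)"
      "eventually (\<lambda>w. g w = mahler_continuation p a C f 0 w) (at 0)"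
  proof (rule mat_meromorphic_on_Union_chain)
    show "incseq (mahler_disk p r)" using p1 r(2) by (rule incseq_mahler_disk)
    show "0 \<in> mahler_disk p r 0" using r(1) by simp
    show "mat_meromorphic_on (mahler_continuation p a C f k) (mahler_disk p r k)" for k
      using p1 r(2) a f by (rule mat_meromorphic_on_mahler_continuation)
    show "eventually (\<lambda>w. mahler_continuation p a C f k w = mahler_continuation p a C f 0 w) (at 0)"
      for k using mahler_continuation_eventually_eq[OF p1 eq] by simp
  qed (auto simp: mahler_disk_def)
  then show thesis
    using that Union_mahler_disk[OF p r] by simp
qed

section \<open>Rational systems\<close>

definition mat_has_fps_expansion :: "(complex \<Rightarrow> complex^'n^'m) \<Rightarrow> complex fps^'n^'m \<Rightarrow> bool" where
  "mat_has_fps_expansion X M \<longleftrightarrow> (\<forall>i j. (\<lambda>w. X w $ i $ j) has_fps_expansion ent M i j)"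

lemma mat_has_fps_expansion_mult:
  assumes "mat_has_fps_expansion X M" "mat_has_fps_expansion Y N"
  shows "mat_has_fps_expansion (\<lambda>w. X w ** Y w) (M ** N)"
  using assms unfolding mat_has_fps_expansion_def matrix_matrix_mult_def
  by (auto intro!: has_fps_expansion_sum has_fps_expansion_mult)

lemma mat_has_fps_expansion_const: "mat_has_fps_expansion (\<lambda>w. C) (const_mat C)"
  by (simp add: mat_has_fps_expansion_def const_mat_def)

lemma mat_has_fps_expansion_compose_power:
  assumes "mat_has_fps_expansion X M" "p \<ge> 1"
  shows "mat_has_fps_expansion (\<lambda>w. X (w ^ p)) (mat_phi p M)"
  unfolding mat_has_fps_expansion_def mat_phi_def mahler_phi_def vec_lambda_beta
proof (intro allI)
  fix i j
  have "((\<lambda>w. X w $ i $ j) \<circ> (\<lambda>w. w ^ p)) has_fps_expansion (ent M i j oo fps_X ^ p)"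
    using assms by (intro has_fps_expansion_compose has_fps_expansion_fps_X_power)
      (auto simp: mat_has_fps_expansion_def)
  then show "(\<lambda>w. X (w ^ p) $ i $ j) has_fps_expansion (ent M i j oo fps_X ^ p)"
    by (simp add: comp_def)
qed

lemma mat_has_fps_expansion_eventually_eq:
  assumes "mat_has_fps_expansion X M" "mat_has_fps_expansion Y M"
  shows "eventually (\<lambda>w. X w = Y w) (nhds 0)"
proof -
  have "eventually (\<lambda>w. X w $ i $ j = Y w $ i $ j) (nhds 0)" for i j
  proof -
    have "eventually (\<lambda>w. eval_fps (ent M i j) w = X w $ i $ j) (nhds 0)"
      and "eventually (\<lambda>w. eval_fps (ent M i j) w = Y w $ i $ j) (nhds 0)"
      using assms by (simp_all add: mat_has_fps_expansion_def has_fps_expansion_def)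
    then show ?thesis by eventually_elim simp
  qed
  then have "eventually (\<lambda>w. \<forall>i j. X w $ i $ j = Y w $ i $ j) (nhds 0)"
    by (intro eventually_all_finite) auto
  then show ?thesis by eventually_elim (simp add: vec_eq_iff)
qed

lemma mat_has_fps_expansion_at_0:
  assumes "mat_has_fps_expansion X M"
  shows "X 0 = mat_at_infty M"
proof -
  have "X 0 $ i $ j = ent M i j $ 0" for i j
  proof -
    have "eventually (\<lambda>w. eval_fps (ent M i j) w = X w $ i $ j) (nhds 0)"
      using assms by (simp add: mat_has_fps_expansion_def has_fps_expansion_def)
    then show ?thesis by (auto dest: eventually_nhds_x_imp_x simp: eval_fps_at_0)
  qed
  then show ?thesis by (simp add: mat_at_infty_def vec_eq_iff)
qed

lemma eventually_det_nonzero_if_mat_has_fps_expansion: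
  assumes "mat_has_fps_expansion X M" "det (mat_at_infty M) \<noteq> 0"
  shows "eventually (\<lambda>w. det (X w) \<noteq> 0) (nhds 0)"
proof -
  have entries: "isCont (\<lambda>w. X w $ i $ j) 0" for i j
    using assms(1) by (auto simp: mat_has_fps_expansion_def intro: has_fps_expansion_imp_continuous)
  have "isCont (\<lambda>w. det (X w)) 0"
    unfolding det_def by (intro continuous_intros entries)
  moreover have "det (X 0) \<noteq> 0"
    using assms mat_has_fps_expansion_at_0 by metis
  ultimately have "eventually (\<lambda>w. det (X w) \<noteq> 0) (at 0)"
    by (intro tendsto_imp_eventually_ne) (auto simp: isCont_def)
  with \<open>det (X 0) \<noteq> 0\<close> show ?thesis
    by (simp add: eventually_nhds_conv_at)
qed

definition eval_fps_mat :: "complex fps^'n^'m \<Rightarrow> complex \<Rightarrow> complex^'n^'m" where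
  "eval_fps_mat M w = (\<chi> i j. eval_fps (ent M i j) w)"

lemma mat_has_fps_expansion_eval_fps_mat:
  "convergent_mat M \<Longrightarrow> mat_has_fps_expansion (eval_fps_mat M) M"
  by (simp add: mat_has_fps_expansion_def eval_fps_mat_def convergent_mat_def convergent_fps_def
      eval_fps_has_fps_expansion)

lemma mat_meromorphic_on_eval_fps_mat:
  assumes "\<And>i j. ereal r \<le> fps_conv_radius (ent M i j)"
  shows "mat_meromorphic_on (eval_fps_mat M) (ball 0 r)"
proof -
  have "ball (0::complex) r \<subseteq> eball 0 (fps_conv_radius (ent M i j))" for i j
  proof
    fix w :: complex assume "w \<in> ball 0 r"
    then have "ereal (norm w) < ereal r" by simp
    also have "\<dots> \<le> fps_conv_radius (ent M i j)" by (rule assms)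
    finally show "w \<in> eball 0 (fps_conv_radius (ent M i j))" by simp
  qed
  then have "eval_fps (ent M i j) analytic_on ball 0 r" for i j
    by (rule FPS_Convergence.analytic_on_eval_fps)
  then show ?thesis
    unfolding mat_meromorphic_on_def eval_fps_mat_def vec_lambda_beta
    by (simp add: analytic_on_imp_meromorphic_on)
qed

lemma rational_mat_expansion:
  assumes "rational_mat A"
  obtains a where "mat_meromorphic_on a UNIV" "mat_has_fps_expansion a A"
proof -
  obtain P Q where PQ: "\<And>i j. poly (Q i j) 0 \<noteq> 0"
      "\<And>i j. ent A i j = fps_of_poly (P i j) / fps_of_poly (Q i j)"
    using assms unfolding rational_mat_def rational_fps_def by metis
  define a where "a w = (\<chi> i j. poly (P i j) w / poly (Q i j) w)" for w
  have "poly p meromorphic_on UNIV" for p :: "complex poly"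
    by (intro analytic_on_imp_meromorphic_on)
      (simp add: analytic_on_open poly_holomorphic_on holomorphic_on_id)
  then have "mat_meromorphic_on a UNIV"
    by (auto simp: mat_meromorphic_on_def a_def intro!: meromorphic_on_divide)
  moreover have "mat_has_fps_expansion a A"
    unfolding mat_has_fps_expansion_def a_def vec_lambda_beta PQ(2)
    using PQ(1) by (intro allI has_fps_expansion_divide') (auto simp: poly_0_coeff_0 has_fps_expansion_def)
  ultimately show thesis by (rule that)
qed

lemma GL_meromorphic_if_extension:
  fixes g :: "complex \<Rightarrow> complex^'n^'n" and F :: "complex fps^'n^'n"
  assumes "mat_meromorphic_on g (ball 0 1)" and "eventually (\<lambda>w. g w = eval_fps_mat F w) (at 0)"
    and "eventually (\<lambda>w. det (g w) \<noteq> 0) (at 0)"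
  shows "GL_meromorphic F"
proof -
  define Fm :: "(complex \<Rightarrow> complex)^'n^'n" where "Fm = (\<chi> i j. (\<lambda>w. ent (g w) i j))"
  define Gm :: "(complex \<Rightarrow> complex)^'n^'n" where
    "Gm = (\<chi> i j. (\<lambda>w. ent (cramer_inverse (g w)) i j))"
  have "meromorphic_ext (ent F i j) (ent Fm i j)" for i j
    using assms(1,2) unfolding meromorphic_ext_def mat_meromorphic_on_def
    by (auto simp: Fm_def eval_fps_mat_def elim: eventually_mono)
  moreover have "ent Gm i j meromorphic_on ball 0 1" for i j
    using mat_meromorphic_on_cramer_inverse[OF assms(1)] by (simp add: Gm_def mat_meromorphic_on_def)
  moreover have "eventually (\<lambda>w. (\<chi> i j. ent Fm i j w) ** (\<chi> i j. ent Gm i j w) = mat 1) (at 0)"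
    using assms(3) by eventually_elim (simp add: Fm_def Gm_def matrix_mul_cramer_inverse)
  ultimately show ?thesis
    unfolding GL_meromorphic_def by blast
qed

lemma GL_meromorphic_mahler_gauge:
  assumes p: "p \<ge> 2" and A: "fuchsian_at_infty A" "rational_mat A"
    and F: "convergent_mat F" "mat_at_infty F = mat 1"
      "matrix_inv (mat_phi p F) ** A ** F = const_mat (mat_at_infty A)"
  shows "GL_meromorphic F"
proof -
  obtain r where r: "0 < r" "r \<le> 1" "\<And>i j. ereal r \<le> fps_conv_radius (ent F i j)"
    using F(1) fps_conv_radius_lower_bound unfolding convergent_mat_iff_geometric_growth by blast
  obtain a where a: "mat_meromorphic_on a UNIV" "mat_has_fps_expansion a A"
    using rational_mat_expansion[OF A(2)] by blast
  define f where "f = eval_fps_mat F"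
  have f: "mat_has_fps_expansion f F"
    using F(1) by (simp add: f_def mat_has_fps_expansion_eval_fps_mat)
  have "A ** F = mat_phi p F ** const_mat (mat_at_infty A)"
    using F(2,3) p by (simp add: mahler_gauge_eq_iff mat_at_infty_eq_coeff_mat)
  then have "eventually (\<lambda>w. a w ** f w = f (w ^ p) ** mat_at_infty A) (nhds 0)"
    using mat_has_fps_expansion_mult[OF a(2) f] p
      mat_has_fps_expansion_mult[OF mat_has_fps_expansion_compose_power[OF f, of p]
        mat_has_fps_expansion_const[of "mat_at_infty A"]]
    by (intro mat_has_fps_expansion_eventually_eq) auto
  moreover have "eventually (\<lambda>w. det (a w) \<noteq> 0) (nhds 0)"
    using A(1) by (intro eventually_det_nonzero_if_mat_has_fps_expansion[OF a(2)])
      (simp add: fuchsian_at_infty_def invertible_det_nz)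
  ultimately have "eventually (\<lambda>w. a w ** f w = f (w ^ p) ** mat_at_infty A \<and> det (a w) \<noteq> 0) (at 0)"
    by (simp add: eventually_nhds_conv_at eventually_conj_iff)
  then obtain g where g: "mat_meromorphic_on g (ball 0 1)" "eventually (\<lambda>w. g w = f w) (at 0)"
    using mahler_meromorphic_continuation[OF p r(1,2) mat_meromorphic_on_subset[OF a(1)]
        mat_meromorphic_on_eval_fps_mat[OF r(3)]]
    by (auto simp: f_def)
  have "eventually (\<lambda>w. det (f w) \<noteq> 0) (at 0)"
    using eventually_det_nonzero_if_mat_has_fps_expansion[OF f] F(2)
    by (simp add: eventually_nhds_conv_at)
  with g(2) have "eventually (\<lambda>w. det (g w) \<noteq> 0) (at 0)"
    by eventually_elim simp
  with g show ?thesis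
    by (intro GL_meromorphic_if_extension) (auto simp: f_def)
qed

theorem mainTheorem3:
  fixes A :: "complex fps ^'n^'n" and p :: nat
  assumes "p \<ge> 2"
    and "fuchsian_at_infty A"
  shows "(\<exists>!F :: complex fps ^'n^'n. invertible F \<and> mat_at_infty F = mat 1 \<and>
            matrix_inv (mat_phi p F) ** A ** F = const_mat (mat_at_infty A))
       \<and> (\<forall>F :: complex fps ^'n^'n. invertible F \<and> mat_at_infty F = mat 1 \<and>
            matrix_inv (mat_phi p F) ** A ** F = const_mat (mat_at_infty A) \<longrightarrow>
            GL_convergent F \<and> (rational_mat A \<longrightarrow> GL_meromorphic F))"
proof -
  have "invertible (mat_at_infty A)"
    using assms(2) by (simp add: fuchsian_at_infty_def)
  note gauge = mahler_gauge_iff[OF assms(1) this]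
  show ?thesis
  proof (intro conjI allI impI)
    show "\<exists>!F. invertible F \<and> mat_at_infty F = mat 1 \<and>
        matrix_inv (mat_phi p F) ** A ** F = const_mat (mat_at_infty A)"
      by (simp add: gauge)
    fix F assume F: "invertible F \<and> mat_at_infty F = mat 1 \<and>
        matrix_inv (mat_phi p F) ** A ** F = const_mat (mat_at_infty A)"
    then show conv: "GL_convergent F"
      using gauge GL_convergent_mahler_gauge[OF assms] by simp
    assume "rational_mat A"
    with F conv show "GL_meromorphic F"
      using GL_meromorphic_mahler_gauge[OF assms] by (simp add: GL_convergent_def)
  qed
qed

end
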